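(* Let $\Sigma_1\subset(N_1)_{\mathbf R}$ and $\Sigma_2\subset(N_2)_{\mathbf R}$ be amply equivalent complete fans (via $\Psi$) with $\Sigma_1$ smooth, and let $\Phi:(N_1)_{\mathbf Q}\to(N_2)_{\mathbf Q}$ be the $\mathbf Q$-linear isomorphism with $\Phi(u_\rho)=u_{\Psi(\rho)}$ for all $\rho\in\Sigma_1(1)$. Then the restriction of $\Phi$ to $N_1$ factors through $N_2$ as an injective $\mathbf Z$-linear map $N_1\hookrightarrow N_2$. Moreover $\Sigma_2$ is simplicial, and the following are equivalent: (1) some maximal cone of $\Sigma_2$ is smooth; (2) the restriction of $\Phi$ to $N_1$ factors as a $\mathbf Z$-isomorphism $N_1\cong N_2$; (3) $\Sigma_2$ is smooth. In this case, the isomorphism $N_1\cong N_2$ induces a toric isomorphism $X_{\Sigma_1}\cong X_{\Sigma_2}$.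
   Context: For a fan: rays $\Sigma(1)$, primitive generators $u_\rho$; a primitive collection is $C\subset\Sigma(1)$ not contained in $\sigma(1)$ for any cone $\sigma$ while every proper subset is. Complete fans $\Sigma_1,\Sigma_2$ in lattices of equal rank are amply equivalent via a bijection $\Psi:\Sigma_1(1)\to\Sigma_2(1)$ if $\Psi$ maps primitive collections exactly onto primitive collections and, for all integers $(a_\rho)$, $\sum a_\rho u_\rho=0\iff\sum a_\rho u_{\Psi(\rho)}=0$; in that case a $\mathbf Q$-linear isomorphism $\Phi$ with $\Phi(u_\rho)=u_{\Psi(\rho)}$ exists, and its $\mathbf R$-extension maps cones of $\Sigma_1$ bijectively onto cones of $\Sigma_2$. A cone is smooth if its primitive ray generators form part of a $\mathbf Z$-basis of the lattice; a fan is smooth (resp. simplicial) if all its cones are smooth (resp. have linearly independent ray generators). *)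

theory Defs
  imports "HOL-Analysis.Analysis"
begin

text \<open>The lattice N is modelled as the integer points of real^'n (so N_R = real^'n).\<close>

definition lattice_pt :: "real^'n \<Rightarrow> bool" where
  "lattice_pt v \<longleftrightarrow> (\<forall>i. v $ i \<in> \<int>)"

definition lattice :: "(real^'n) set" where
  "lattice = {v. lattice_pt v}"

definition pos_hull :: "(real^'n) set \<Rightarrow> (real^'n) set" where
  "pos_hull S = {y. \<exists>c. (\<forall>s\<in>S. c s \<ge> 0) \<and> y = (\<Sum>s\<in>S. c s *\<^sub>R s)}"

definition rat_poly_cone :: "(real^'n) set \<Rightarrow> bool" where
  "rat_poly_cone \<sigma> \<longleftrightarrow> (\<exists>S. finite S \<and> S \<subseteq> lattice \<and> \<sigma> = pos_hull S)"

definition strongly_convex :: "(real^'n) set \<Rightarrow> bool" where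
  "strongly_convex \<sigma> \<longleftrightarrow> \<sigma> \<inter> uminus ` \<sigma> = {0}"

definition fan :: "(real^'n) set set \<Rightarrow> bool" where
  "fan \<Sigma> \<longleftrightarrow> finite \<Sigma> \<and>
     (\<forall>\<sigma>\<in>\<Sigma>. rat_poly_cone \<sigma> \<and> strongly_convex \<sigma>) \<and>
     (\<forall>\<sigma>\<in>\<Sigma>. \<forall>\<tau>. \<tau> face_of \<sigma> \<and> \<tau> \<noteq> {} \<longrightarrow> \<tau> \<in> \<Sigma>) \<and>
     (\<forall>\<sigma>\<in>\<Sigma>. \<forall>\<tau>\<in>\<Sigma>. (\<sigma> \<inter> \<tau>) face_of \<sigma> \<and> (\<sigma> \<inter> \<tau>) face_of \<tau>)"

definition complete_fan :: "(real^'n) set set \<Rightarrow> bool" where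
  "complete_fan \<Sigma> \<longleftrightarrow> fan \<Sigma> \<and> \<Union>\<Sigma> = UNIV"

definition rays :: "(real^'n) set set \<Rightarrow> (real^'n) set set" where
  "rays \<Sigma> = {\<rho>\<in>\<Sigma>. aff_dim \<rho> = 1}"

definition cone_rays :: "(real^'n) set set \<Rightarrow> (real^'n) set \<Rightarrow> (real^'n) set set" where
  "cone_rays \<Sigma> \<sigma> = {\<rho>\<in>rays \<Sigma>. \<rho> \<subseteq> \<sigma>}"

definition prim_gen :: "(real^'n) set \<Rightarrow> real^'n" where
  "prim_gen \<rho> = (THE u. u \<in> \<rho> \<and> lattice_pt u \<and> u \<noteq> 0 \<and>
      (\<forall>v\<in>\<rho>. lattice_pt v \<longrightarrow> (\<exists>k::nat. v = real k *\<^sub>R u)))"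

definition primitive_collection :: "(real^'n) set set \<Rightarrow> (real^'n) set set \<Rightarrow> bool" where
  "primitive_collection \<Sigma> C \<longleftrightarrow> C \<subseteq> rays \<Sigma> \<and>
     \<not> (\<exists>\<sigma>\<in>\<Sigma>. C \<subseteq> cone_rays \<Sigma> \<sigma>) \<and>
     (\<forall>C'. C' \<subset> C \<longrightarrow> (\<exists>\<sigma>\<in>\<Sigma>. C' \<subseteq> cone_rays \<Sigma> \<sigma>))"

definition amply_equivalent ::
  "(real^'n) set set \<Rightarrow> (real^'n) set set \<Rightarrow> ((real^'n) set \<Rightarrow> (real^'n) set) \<Rightarrow> bool" where
  "amply_equivalent \<Sigma>1 \<Sigma>2 \<Psi> \<longleftrightarrow>
     complete_fan \<Sigma>1 \<and> complete_fan \<Sigma>2 \<and>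
     bij_betw \<Psi> (rays \<Sigma>1) (rays \<Sigma>2) \<and>
     (\<forall>C. C \<subseteq> rays \<Sigma>1 \<longrightarrow> (primitive_collection \<Sigma>1 C \<longleftrightarrow> primitive_collection \<Sigma>2 (\<Psi> ` C))) \<and>
     (\<forall>a :: (real^'n) set \<Rightarrow> int.
        (\<Sum>\<rho>\<in>rays \<Sigma>1. of_int (a \<rho>) *\<^sub>R prim_gen \<rho>) = 0 \<longleftrightarrow>
        (\<Sum>\<rho>\<in>rays \<Sigma>1. of_int (a \<rho>) *\<^sub>R prim_gen (\<Psi> \<rho>)) = 0)"

definition Z_basis :: "(real^'n) set \<Rightarrow> bool" where
  "Z_basis B \<longleftrightarrow> finite B \<and> B \<subseteq> lattice \<and>
     (\<forall>c :: real^'n \<Rightarrow> int. (\<Sum>b\<in>B. of_int (c b) *\<^sub>R b) = 0 \<longrightarrow> (\<forall>b\<in>B. c b = 0)) \<and>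
     (\<forall>v\<in>lattice. \<exists>c :: real^'n \<Rightarrow> int. v = (\<Sum>b\<in>B. of_int (c b) *\<^sub>R b))"

definition smooth_cone :: "(real^'n) set set \<Rightarrow> (real^'n) set \<Rightarrow> bool" where
  "smooth_cone \<Sigma> \<sigma> \<longleftrightarrow> (\<exists>B. Z_basis B \<and> prim_gen ` cone_rays \<Sigma> \<sigma> \<subseteq> B)"

definition smooth_fan :: "(real^'n) set set \<Rightarrow> bool" where
  "smooth_fan \<Sigma> \<longleftrightarrow> (\<forall>\<sigma>\<in>\<Sigma>. smooth_cone \<Sigma> \<sigma>)"

definition simplicial_fan :: "(real^'n) set set \<Rightarrow> bool" where
  "simplicial_fan \<Sigma> \<longleftrightarrow> (\<forall>\<sigma>\<in>\<Sigma>.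
     inj_on prim_gen (cone_rays \<Sigma> \<sigma>) \<and> independent (prim_gen ` cone_rays \<Sigma> \<sigma>))"

definition maximal_cone :: "(real^'n) set set \<Rightarrow> (real^'n) set \<Rightarrow> bool" where
  "maximal_cone \<Sigma> \<sigma> \<longleftrightarrow> \<sigma> \<in> \<Sigma> \<and> \<not> (\<exists>\<tau>\<in>\<Sigma>. \<sigma> \<subset> \<tau>)"

end

theory Submission
  imports Defs
begin

(* A set of rays lies in a cone exactly when it contains no primitive collection, so Psi matches
   the ray sets of the cones of Sigma1 with those of Sigma2. Since Phi sends u_rho to u_Psi(rho),
   the generators of every cone of Sigma2 are the Phi-image of part of a Z-basis of the lattice;
   hence they are linearly independent, Sigma2 is simplicial, and Phi carries each cone of Sigma1
   onto a face of a simplicial cone of Sigma2, i.e. onto a cone of Sigma2.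
   A maximal cone of a complete fan is full-dimensional, so the generators of a smooth maximal cone
   form a Z-basis of the lattice. Phi sends those of Sigma1 to lattice points, whence Phi(N) is
   contained in N; the same argument for the inverse of Phi and a smooth maximal cone of Sigma2
   gives equality, and then Phi carries the Z-bases witnessing smoothness of Sigma1 to Z-bases
   witnessing smoothness of Sigma2. *)

subsection \<open>Positive hulls\<close>

lemma zero_in_pos_hull: "0 \<in> pos_hull S"
  unfolding pos_hull_def by (auto intro!: exI[of _ "\<lambda>_. 0"])

lemma pos_hull_inc: "finite S \<Longrightarrow> x \<in> S \<Longrightarrow> x \<in> pos_hull S"
  unfolding pos_hull_def
  by (rule CollectI, rule exI[of _ "\<lambda>s. if s = x then 1 else 0"])
     (simp add: if_distrib[of "\<lambda>r. r *\<^sub>R _"] cong: if_cong)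

lemma convex_cone_pos_hull: "convex_cone (pos_hull S)"
  unfolding convex_cone_iff
proof (intro conjI ballI allI impI)
  show "0 \<in> pos_hull S" by (rule zero_in_pos_hull)
  fix x y assume "x \<in> pos_hull S" "y \<in> pos_hull S"
  then obtain a b where a: "\<forall>s\<in>S. a s \<ge> 0" "x = (\<Sum>s\<in>S. a s *\<^sub>R s)"
    and b: "\<forall>s\<in>S. b s \<ge> 0" "y = (\<Sum>s\<in>S. b s *\<^sub>R s)"
    unfolding pos_hull_def by auto
  show "x + y \<in> pos_hull S" unfolding pos_hull_def
    by (rule CollectI, rule exI[of _ "\<lambda>s. a s + b s"]) (simp add: a b scaleR_add_left sum.distrib)
next
  fix x and c :: real assume "x \<in> pos_hull S" "0 \<le> c"
  then obtain a where a: "\<forall>s\<in>S. a s \<ge> 0" "x = (\<Sum>s\<in>S. a s *\<^sub>R s)"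
    unfolding pos_hull_def by auto
  show "c *\<^sub>R x \<in> pos_hull S" unfolding pos_hull_def
    by (rule CollectI, rule exI[of _ "\<lambda>s. c * a s"]) (simp add: a \<open>0 \<le> c\<close> scaleR_sum_right)
qed

lemma pos_hull_subset_convex_cone_hull:
  assumes "finite S"
  shows "pos_hull S \<subseteq> convex_cone hull S"
proof
  fix y assume "y \<in> pos_hull S"
  then obtain c where c: "\<forall>s\<in>S. c s \<ge> 0" and y: "y = (\<Sum>s\<in>S. c s *\<^sub>R s)"
    unfolding pos_hull_def by auto
  have "(\<Sum>s\<in>T. c s *\<^sub>R s) \<in> convex_cone hull S" if "T \<subseteq> S" for T
    using finite_subset[OF that assms] that
  proof (induction T rule: finite_induct)
    case empty
    then show ?case by (simp add: convex_cone_hull_contains_0)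
  next
    case (insert x F)
    then show ?case by (simp add: convex_cone_hull_add convex_cone_hull_mul hull_inc c)
  qed
  then show "y \<in> convex_cone hull S" using y by blast
qed

lemma pos_hull_eq_convex_cone_hull: "finite S \<Longrightarrow> pos_hull S = convex_cone hull S"
  by (metis convex_cone_pos_hull hull_minimal pos_hull_inc pos_hull_subset_convex_cone_hull
      subsetI subset_antisym)

lemma pos_hull_mono: "finite S \<Longrightarrow> T \<subseteq> S \<Longrightarrow> pos_hull T \<subseteq> pos_hull S"
  by (metis finite_subset hull_mono pos_hull_eq_convex_cone_hull)

lemma pos_hull_minimal: "finite T \<Longrightarrow> T \<subseteq> pos_hull S \<Longrightarrow> pos_hull T \<subseteq> pos_hull S"
  by (simp add: pos_hull_eq_convex_cone_hull hull_minimal convex_cone_pos_hull)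

lemma pos_hull_linear_image: "linear f \<Longrightarrow> finite S \<Longrightarrow> pos_hull (f ` S) = f ` pos_hull S"
  by (simp add: pos_hull_eq_convex_cone_hull convex_cone_hull_linear_image)

lemma convex_pos_hull: "convex (pos_hull S)"
  using convex_cone_pos_hull[of S] unfolding convex_cone_def by blast

lemma closed_pos_hull: "finite S \<Longrightarrow> closed (pos_hull (S :: (real^'n) set))"
  by (simp add: pos_hull_eq_convex_cone_hull closed_convex_cone_hull)

lemma pos_hull_subset_span: "finite S \<Longrightarrow> pos_hull S \<subseteq> span S"
  by (simp add: pos_hull_eq_convex_cone_hull hull_minimal convex_cone_span span_superset)

lemma pos_hull_empty: "pos_hull {} = {0}"
  unfolding pos_hull_def by simp

lemma pos_hull_singleton: "pos_hull {s} = {c *\<^sub>R s | c. c \<ge> 0}"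
proof
  show "pos_hull {s} \<subseteq> {c *\<^sub>R s | c. c \<ge> 0}" unfolding pos_hull_def by auto
  show "{c *\<^sub>R s | c. c \<ge> 0} \<subseteq> pos_hull {s}"
    unfolding pos_hull_def by (auto intro: exI[of _ "\<lambda>_. _"])
qed

lemma pos_hull_insert_decompose:
  assumes "finite T" "x \<in> pos_hull (insert s T)"
  obtains a y where "a \<ge> 0" "y \<in> pos_hull T" "x = a *\<^sub>R s + y"
proof (cases "s \<in> T")
  case True
  then show ?thesis using assms that[of 0 x] by (simp add: insert_absorb)
next
  case False
  obtain c where c: "\<forall>t\<in>insert s T. c t \<ge> 0" "x = (\<Sum>t\<in>insert s T. c t *\<^sub>R t)"
    using assms(2) unfolding pos_hull_def by auto
  have "x = c s *\<^sub>R s + (\<Sum>t\<in>T. c t *\<^sub>R t)" using c(2) False assms(1) by simp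
  moreover have "(\<Sum>t\<in>T. c t *\<^sub>R t) \<in> pos_hull T" unfolding pos_hull_def using c(1) by auto
  ultimately show ?thesis using c(1) that by blast
qed

lemma aff_dim_pos_hull_singleton:
  fixes s :: "real^'n"
  assumes "s \<noteq> 0"
  shows "aff_dim (pos_hull {s}) = 1"
proof -
  have "{0, s} \<subseteq> pos_hull {s}" by (simp add: zero_in_pos_hull pos_hull_inc)
  moreover have "pos_hull {s} \<subseteq> affine hull {0, s}"
  proof
    fix x assume "x \<in> pos_hull {s}"
    then obtain c where "x = c *\<^sub>R s" unfolding pos_hull_singleton by blast
    then show "x \<in> affine hull {0, s}" unfolding affine_hull_2
      by (intro CollectI exI[of _ "1 - c"] exI[of _ c]) simp
  qed
  ultimately have "aff_dim {0, s} \<le> aff_dim (pos_hull {s})"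
    and "aff_dim (pos_hull {s}) \<le> aff_dim (affine hull {0, s})"
    using aff_dim_subset by blast+
  then show ?thesis using assms by simp
qed

lemma pos_hull_irredundant_subset:
  "finite S \<Longrightarrow> \<exists>S'\<subseteq>S. pos_hull S' = pos_hull S \<and> (\<forall>s\<in>S'. s \<notin> pos_hull (S' - {s}))"
proof (induction S rule: finite_psubset_induct)
  case (psubset A)
  show ?case
  proof (cases "\<exists>s\<in>A. s \<in> pos_hull (A - {s})")
    case True
    then obtain s where s: "s \<in> A" "s \<in> pos_hull (A - {s})" by blast
    have "pos_hull (A - {s}) = pos_hull A"
      using s psubset.hyps
      by (metis finite_Diff hull_redundant insert_Diff pos_hull_eq_convex_cone_hull)
    moreover obtain S' where "S' \<subseteq> A - {s}" "pos_hull S' = pos_hull (A - {s})"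
        "\<forall>t\<in>S'. t \<notin> pos_hull (S' - {t})"
      using psubset.IH[of "A - {s}"] s(1) by blast
    ultimately show ?thesis by blast
  qed blast
qed

lemma strongly_convex_add_eq_0:
  assumes "strongly_convex K" "x \<in> K" "y \<in> K" "x + y = 0"
  shows "x = 0"
proof -
  have "x = - y" using assms(4) by (simp add: eq_neg_iff_add_eq_0)
  then have "x \<in> uminus ` K" using assms(3) by (rule image_eqI)
  then show ?thesis using assms(1,2) unfolding strongly_convex_def by blast
qed

lemma irredundant_generator_face_of:
  assumes fS: "finite S" and sc: "strongly_convex (pos_hull S)"
    and sS: "s \<in> S" and irr: "s \<notin> pos_hull (S - {s})"
  shows "pos_hull {s} face_of pos_hull S"
  unfolding face_of_def
proof (intro conjI ballI impI)
  define T where "T = S - {s}"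
  have fT: "finite T" and ST: "insert s T = S" using fS sS by (auto simp: T_def)
  have cone: "convex_cone (pos_hull S)" "convex_cone (pos_hull T)"
    by (rule convex_cone_pos_hull)+
  have TS: "pos_hull T \<subseteq> pos_hull S" using pos_hull_mono[OF fS] by (simp add: T_def)
  have s_in: "s \<in> pos_hull S" by (rule pos_hull_inc[OF fS sS])
  show "pos_hull {s} \<subseteq> pos_hull S"
    using s_in cone(1) by (auto simp: pos_hull_singleton convex_cone_iff)
  show "convex (pos_hull {s})" by (rule convex_pos_hull)
  fix a b x assume a: "a \<in> pos_hull S" and b: "b \<in> pos_hull S"
    and "x \<in> pos_hull {s}" and "x \<in> open_segment a b"
  then obtain u l where u: "0 < u" "u < 1" and l: "x = (1 - u) *\<^sub>R a + u *\<^sub>R b" "x = l *\<^sub>R s"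
    by (auto simp: in_segment pos_hull_singleton)
  obtain \<alpha> a' where \<alpha>: "\<alpha> \<ge> 0" "a' \<in> pos_hull T" "a = \<alpha> *\<^sub>R s + a'"
    using pos_hull_insert_decompose[OF fT] a ST by metis
  obtain \<beta> b' where \<beta>: "\<beta> \<ge> 0" "b' \<in> pos_hull T" "b = \<beta> *\<^sub>R s + b'"
    using pos_hull_insert_decompose[OF fT] b ST by metis
  define w where "w = (1 - u) *\<^sub>R a' + u *\<^sub>R b'"
  define \<gamma> where "\<gamma> = l - (1 - u) * \<alpha> - u * \<beta>"
  have a'S: "(1 - u) *\<^sub>R a' \<in> pos_hull S" and b'S: "u *\<^sub>R b' \<in> pos_hull S"
    using TS \<alpha>(2) \<beta>(2) cone(1) u by (auto simp: convex_cone_iff)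
  have wT: "w \<in> pos_hull T" unfolding w_def using cone(2) \<alpha>(2) \<beta>(2) u by (simp add: convex_cone_iff)
  have w: "w = \<gamma> *\<^sub>R s"
    using l unfolding w_def \<gamma>_def \<alpha>(3) \<beta>(3) by (simp add: algebra_simps)
  \<comment> \<open>\<open>\<gamma> > 0\<close> would put \<open>s\<close> into \<open>pos_hull T\<close>; otherwise both \<open>w\<close> and \<open>-w\<close> lie in the cone.\<close>
  have "\<not> \<gamma> > 0"
  proof
    assume "\<gamma> > 0"
    then have "s = (1 / \<gamma>) *\<^sub>R w" using w by simp
    then show False using irr wT cone(2) \<open>\<gamma> > 0\<close> by (simp add: convex_cone_iff T_def)
  qed
  then have "- w \<in> pos_hull S" using w s_in cone(1) by (simp add: convex_cone_iff flip: scaleR_minus_left)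
  then have "w = 0" using strongly_convex_add_eq_0[OF sc] wT TS by auto
  then have "(1 - u) *\<^sub>R a' = 0" "u *\<^sub>R b' = 0"
    using strongly_convex_add_eq_0[OF sc a'S b'S] strongly_convex_add_eq_0[OF sc b'S a'S]
    by (simp_all add: w_def add.commute)
  then have "a' = 0" "b' = 0" using u by auto
  then show "a \<in> pos_hull {s}" "b \<in> pos_hull {s}"
    using \<alpha> \<beta> by (auto simp: pos_hull_singleton)
qed

lemma strongly_convex_pos_hull_extreme_generators:
  assumes "finite S" "strongly_convex (pos_hull S)"
  shows "\<exists>S'\<subseteq>S. pos_hull S' = pos_hull S \<and> (\<forall>s\<in>S'. s \<noteq> 0 \<and> pos_hull {s} face_of pos_hull S)"
proof -
  obtain S' where S': "S' \<subseteq> S" "pos_hull S' = pos_hull S" "\<forall>s\<in>S'. s \<notin> pos_hull (S' - {s})"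
    using pos_hull_irredundant_subset[OF assms(1)] by blast
  have "finite S'" using S'(1) assms(1) by (rule finite_subset)
  then have "pos_hull {s} face_of pos_hull S" if "s \<in> S'" for s
    using irredundant_generator_face_of[of S' s] S' assms(2) that by simp
  moreover have "s \<noteq> 0" if "s \<in> S'" for s
    using S'(3) that zero_in_pos_hull by metis
  ultimately show ?thesis using S' by blast
qed

lemma pos_hull_face_of_independent:
  fixes T :: "(real^'n) set"
  assumes fT: "finite T" and iT: "independent T" and sub: "T' \<subseteq> T"
  shows "pos_hull T' face_of pos_hull T"
  unfolding face_of_def
proof (intro conjI ballI impI)
  show "pos_hull T' \<subseteq> pos_hull T" using pos_hull_mono[OF fT sub] .
  show "convex (pos_hull T')" by (rule convex_pos_hull)
  fix a b x assume aT: "a \<in> pos_hull T" and bT: "b \<in> pos_hull T" and xT: "x \<in> pos_hull T'"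
    and "x \<in> open_segment a b"
  then obtain u where u: "0 < u" "u < 1" "x = (1 - u) *\<^sub>R a + u *\<^sub>R b" by (auto simp: in_segment)
  obtain \<alpha> where \<alpha>: "\<forall>t\<in>T. \<alpha> t \<ge> 0" "a = (\<Sum>t\<in>T. \<alpha> t *\<^sub>R t)"
    using aT unfolding pos_hull_def by blast
  obtain \<beta> where \<beta>: "\<forall>t\<in>T. \<beta> t \<ge> 0" "b = (\<Sum>t\<in>T. \<beta> t *\<^sub>R t)"
    using bT unfolding pos_hull_def by blast
  obtain \<xi> where \<xi>: "x = (\<Sum>t\<in>T'. \<xi> t *\<^sub>R t)"
    using xT unfolding pos_hull_def by blast
  have "x = (\<Sum>t\<in>T. (if t \<in> T' then \<xi> t else 0) *\<^sub>R t)"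
    unfolding \<xi> by (rule sum.mono_neutral_cong_left[OF fT sub]) auto
  moreover have "x = (\<Sum>t\<in>T. ((1 - u) * \<alpha> t + u * \<beta> t) *\<^sub>R t)"
    unfolding u(3) \<alpha>(2) \<beta>(2) by (simp add: scaleR_sum_right scaleR_add_left sum.distrib)
  ultimately have "(\<Sum>t\<in>T. ((1 - u) * \<alpha> t + u * \<beta> t - (if t \<in> T' then \<xi> t else 0)) *\<^sub>R t) = 0"
    by (simp add: scaleR_diff_left sum_subtractf)
  then have coeff: "(1 - u) * \<alpha> t + u * \<beta> t = 0" if "t \<in> T - T'" for t
    using iT fT that unfolding independent_explicit by fastforce
  have zero: "\<alpha> t = 0 \<and> \<beta> t = 0" if "t \<in> T - T'" for t
  proof -
    have "0 \<le> (1 - u) * \<alpha> t" "0 \<le> u * \<beta> t" using that u \<alpha>(1) \<beta>(1) by simp_all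
    then show ?thesis using coeff[OF that] u by (simp add: add_nonneg_eq_0_iff)
  qed
  have "a = (\<Sum>t\<in>T'. \<alpha> t *\<^sub>R t)" "b = (\<Sum>t\<in>T'. \<beta> t *\<^sub>R t)"
    unfolding \<alpha>(2) \<beta>(2) by (auto intro: sum.mono_neutral_right[OF fT sub] simp: zero)
  then show "a \<in> pos_hull T'" "b \<in> pos_hull T'"
    unfolding pos_hull_def using \<alpha>(1) \<beta>(1) sub by blast+
qed

subsection \<open>Lattice points and primitive generators\<close>

lemma lattice_pt_0: "lattice_pt 0"
  unfolding lattice_pt_def by simp

lemma lattice_pt_add: "lattice_pt a \<Longrightarrow> lattice_pt b \<Longrightarrow> lattice_pt (a + b)"
  unfolding lattice_pt_def by auto

lemma lattice_pt_diff: "lattice_pt a \<Longrightarrow> lattice_pt b \<Longrightarrow> lattice_pt (a - b)"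
  unfolding lattice_pt_def by auto

lemma lattice_pt_scaleR_of_int: "lattice_pt a \<Longrightarrow> lattice_pt (of_int k *\<^sub>R a)"
  unfolding lattice_pt_def by auto

lemma lattice_pt_scaleR_of_nat: "lattice_pt a \<Longrightarrow> lattice_pt (real k *\<^sub>R a)"
  using lattice_pt_scaleR_of_int[of a "int k"] by simp

lemma lattice_pt_int_combination:
  "(\<And>x. x \<in> A \<Longrightarrow> lattice_pt (f x)) \<Longrightarrow> lattice_pt (\<Sum>x\<in>A. of_int (c x) *\<^sub>R f x)"
  by (induction A rule: infinite_finite_induct)
     (simp_all add: lattice_pt_0 lattice_pt_add lattice_pt_scaleR_of_int)

lemma axis_in_lattice: "axis i 1 \<in> lattice"
  unfolding lattice_def lattice_pt_def axis_def by auto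

definition primitive_generator :: "(real^'n) set \<Rightarrow> real^'n \<Rightarrow> bool" where
  "primitive_generator \<rho> u \<longleftrightarrow> u \<in> \<rho> \<and> lattice_pt u \<and> u \<noteq> 0 \<and>
      (\<forall>v\<in>\<rho>. lattice_pt v \<longrightarrow> (\<exists>k::nat. v = real k *\<^sub>R u))"

lemma primitive_generator_unique:
  assumes "primitive_generator \<rho> u" "primitive_generator \<rho> u'"
  shows "u = u'"
proof -
  obtain k k' :: nat where k: "u' = real k *\<^sub>R u" and k': "u = real k' *\<^sub>R u'"
    using assms unfolding primitive_generator_def by blast
  have "u = (real k' * real k) *\<^sub>R u" using k' unfolding k by (simp only: scaleR_scaleR)
  then have "(real k' * real k) *\<^sub>R u = 1 *\<^sub>R u" by (metis scaleR_one)
  then have "real (k' * k) = 1" using assms(1) unfolding primitive_generator_def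
    by (simp only: scaleR_cancel_right of_nat_mult) blast
  then have "k' * k = 1" by (simp only: of_nat_eq_1_iff)
  then have "k = 1" by simp
  then show ?thesis using k by simp
qed

lemma prim_gen_eqI: "primitive_generator \<rho> u \<Longrightarrow> prim_gen \<rho> = u"
  unfolding prim_gen_def primitive_generator_def[symmetric]
  using primitive_generator_unique by blast

lemma lattice_ray_coefficient:
  assumes si: "s $ i \<noteq> 0" and lattice: "lattice_pt (c *\<^sub>R s)" and c: "0 \<le> c"
  shows "\<exists>m::nat. c = real m / \<bar>s $ i\<bar>"
proof -
  have "c * s $ i \<in> \<int>" using lattice unfolding lattice_pt_def by auto
  moreover have "c * \<bar>s $ i\<bar> = \<bar>c * s $ i\<bar>" using c by (simp add: abs_mult)
  ultimately have "c * \<bar>s $ i\<bar> \<in> \<int>" by simp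
  then obtain k where k: "c * \<bar>s $ i\<bar> = of_int k" by (rule Ints_cases)
  moreover have "0 \<le> c * \<bar>s $ i\<bar>" using c by simp
  ultimately have "c * \<bar>s $ i\<bar> = real (nat k)" by simp
  then have "c = real (nat k) / \<bar>s $ i\<bar>" using si by (simp add: eq_divide_eq)
  then show ?thesis by blast
qed

text \<open>The primitive generator of a rational ray is its lattice point with the least positive
  coefficient along \<open>s\<close>; every other lattice point of the ray is a multiple by the division
  algorithm.\<close>

lemma primitive_generator_exists:
  assumes ls: "lattice_pt s" and s0: "s \<noteq> 0"
  shows "\<exists>u. primitive_generator (pos_hull {s}) u"
proof -
  obtain i where si: "s $ i \<noteq> 0" using s0 by (metis vec_eq_iff zero_index)
  define d where "d = \<bar>s $ i\<bar>"
  have d0: "d > 0" using si by (simp add: d_def)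
  define M where "M = {m::nat. 0 < m \<and> lattice_pt ((real m / d) *\<^sub>R s)}"
  obtain m1 :: nat where "1 = real m1 / d"
    using lattice_ray_coefficient[OF si, of 1] ls unfolding d_def by auto
  then have "m1 \<in> M" using d0 ls by (auto simp: M_def)
  define m0 where "m0 = (LEAST m. m \<in> M)"
  have "m0 \<in> M" unfolding m0_def using \<open>m1 \<in> M\<close> by (rule LeastI)
  have m0_least: "m0 \<le> m" if "m \<in> M" for m unfolding m0_def using that by (rule Least_le)
  define u where "u = (real m0 / d) *\<^sub>R s"
  have m0: "m0 > 0" and lu: "lattice_pt u" using \<open>m0 \<in> M\<close> by (auto simp: M_def u_def)
  have "u \<in> pos_hull {s}" "u \<noteq> 0" using m0 d0 s0 by (auto simp: u_def pos_hull_singleton)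
  moreover have "\<exists>k::nat. v = real k *\<^sub>R u" if v: "v \<in> pos_hull {s}" "lattice_pt v" for v
  proof -
    obtain c where c: "c \<ge> 0" "v = c *\<^sub>R s" using v(1) unfolding pos_hull_singleton by blast
    then obtain m :: nat where m: "c = real m / d"
      using lattice_ray_coefficient[OF si] v(2) unfolding d_def by blast
    define q r where "q = m div m0" and "r = m mod m0"
    have "real m = real q * real m0 + real r" unfolding q_def r_def
      by (metis div_mult_mod_eq of_nat_add of_nat_mult)
    then have "real m / d = real r / d + real q * (real m0 / d)"
      by (simp add: add_divide_distrib)
    then have "v = (real r / d) *\<^sub>R s + real q *\<^sub>R u"
      by (simp add: c m u_def scaleR_add_left)
    then have "(real r / d) *\<^sub>R s = v - real q *\<^sub>R u" by simp
    then have "lattice_pt ((real r / d) *\<^sub>R s)"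
      using v(2) lu by (simp add: lattice_pt_diff lattice_pt_scaleR_of_nat)
    moreover have "r < m0" using m0 by (simp add: r_def)
    ultimately have "r = 0" using m0_least unfolding M_def by force
    then show ?thesis using \<open>(real r / d) *\<^sub>R s = v - real q *\<^sub>R u\<close> by auto
  qed
  ultimately show ?thesis using lu unfolding primitive_generator_def by blast
qed

lemma prim_gen_pos_hull_singleton:
  assumes "lattice_pt s" "s \<noteq> 0"
  shows "primitive_generator (pos_hull {s}) (prim_gen (pos_hull {s}))"
    and "pos_hull {prim_gen (pos_hull {s})} = pos_hull {s}"
proof -
  obtain u where u: "primitive_generator (pos_hull {s}) u"
    using primitive_generator_exists[OF assms] by blast
  then show "primitive_generator (pos_hull {s}) (prim_gen (pos_hull {s}))"
    by (simp add: prim_gen_eqI)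
  have "s \<in> pos_hull {s}" by (simp add: pos_hull_inc)
  then obtain k :: nat where "s = real k *\<^sub>R u"
    using u assms(1) unfolding primitive_generator_def by blast
  then have "s \<in> pos_hull {u}" by (auto simp: pos_hull_singleton)
  moreover have "u \<in> pos_hull {s}" using u unfolding primitive_generator_def by blast
  ultimately have "pos_hull {u} = pos_hull {s}" by (simp add: pos_hull_minimal subset_antisym)
  then show "pos_hull {prim_gen (pos_hull {s})} = pos_hull {s}" using u by (simp add: prim_gen_eqI)
qed

subsection \<open>Cones of a fan\<close>

lemma fan_cone_pos_hull:
  assumes "fan \<Sigma>" "\<sigma> \<in> \<Sigma>"
  obtains S where "finite S" "S \<subseteq> lattice" "\<sigma> = pos_hull S"
proof -
  have "rat_poly_cone \<sigma>" using assms by (simp add: fan_def)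
  then show ?thesis using that unfolding rat_poly_cone_def by blast
qed

lemma fan_strongly_convex: "fan \<Sigma> \<Longrightarrow> \<sigma> \<in> \<Sigma> \<Longrightarrow> strongly_convex \<sigma>"
  by (simp add: fan_def)

lemma fan_face_of_mem: "fan \<Sigma> \<Longrightarrow> \<sigma> \<in> \<Sigma> \<Longrightarrow> \<tau> face_of \<sigma> \<Longrightarrow> \<tau> \<noteq> {} \<Longrightarrow> \<tau> \<in> \<Sigma>"
  by (simp add: fan_def)

lemma fan_Int_face_of: "fan \<Sigma> \<Longrightarrow> \<sigma> \<in> \<Sigma> \<Longrightarrow> \<tau> \<in> \<Sigma> \<Longrightarrow> (\<sigma> \<inter> \<tau>) face_of \<sigma>"
  by (simp add: fan_def)

lemma finite_rays: "fan \<Sigma> \<Longrightarrow> finite (rays \<Sigma>)"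
  unfolding fan_def rays_def by simp

lemma cone_rays_subset_rays: "cone_rays \<Sigma> \<sigma> \<subseteq> rays \<Sigma>"
  unfolding cone_rays_def by blast

lemma finite_cone_rays: "fan \<Sigma> \<Longrightarrow> finite (cone_rays \<Sigma> \<sigma>)"
  using finite_subset[OF cone_rays_subset_rays finite_rays] .

lemma closed_fan_cone: "fan \<Sigma> \<Longrightarrow> \<sigma> \<in> \<Sigma> \<Longrightarrow> closed \<sigma>"
  by (metis fan_cone_pos_hull closed_pos_hull)

lemma ray_eq_pos_hull_lattice_pt:
  assumes fan: "fan \<Sigma>" and \<rho>: "\<rho> \<in> rays \<Sigma>"
  obtains s where "lattice_pt s" "s \<noteq> 0" "\<rho> = pos_hull {s}"
proof -
  have \<rho>\<Sigma>: "\<rho> \<in> \<Sigma>" and dim: "aff_dim \<rho> = 1" using \<rho> unfolding rays_def by auto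
  obtain S where S: "finite S" "S \<subseteq> lattice" "\<rho> = pos_hull S"
    using fan_cone_pos_hull[OF fan \<rho>\<Sigma>] by blast
  obtain S' where S': "S' \<subseteq> S" "pos_hull S' = \<rho>" "\<forall>s\<in>S'. s \<noteq> 0 \<and> pos_hull {s} face_of \<rho>"
    using strongly_convex_pos_hull_extreme_generators[OF S(1)] S(3) fan_strongly_convex[OF fan \<rho>\<Sigma>]
    by auto
  have "S' \<noteq> {}" using S'(2) dim by (auto simp: pos_hull_empty)
  then obtain s where s: "s \<in> S'" by blast
  then have s0: "s \<noteq> 0" using S'(3) by blast
  have "pos_hull {s} = \<rho>"
  proof (rule ccontr)
    assume "pos_hull {s} \<noteq> \<rho>"
    then have "aff_dim (pos_hull {s}) < aff_dim \<rho>"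
      using face_of_aff_dim_lt[of \<rho> "pos_hull {s}"] S(3) convex_pos_hull S'(3) s by blast
    then show False using dim aff_dim_pos_hull_singleton[OF s0] by simp
  qed
  moreover have "lattice_pt s" using s S'(1) S(2) unfolding lattice_def by blast
  ultimately show ?thesis using that s0 by blast
qed

lemma prim_gen_ray:
  assumes "fan \<Sigma>" "\<rho> \<in> rays \<Sigma>"
  shows "primitive_generator \<rho> (prim_gen \<rho>)" and "\<rho> = pos_hull {prim_gen \<rho>}"
proof -
  obtain s where s: "lattice_pt s" "s \<noteq> 0" and \<rho>_eq: "\<rho> = pos_hull {s}"
    using ray_eq_pos_hull_lattice_pt[OF assms] by blast
  show "primitive_generator \<rho> (prim_gen \<rho>)"
    unfolding \<rho>_eq by (rule prim_gen_pos_hull_singleton(1)[OF s])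
  show "\<rho> = pos_hull {prim_gen \<rho>}"
    unfolding \<rho>_eq by (rule prim_gen_pos_hull_singleton(2)[OF s, symmetric])
qed

lemma lattice_pt_prim_gen: "fan \<Sigma> \<Longrightarrow> \<rho> \<in> rays \<Sigma> \<Longrightarrow> lattice_pt (prim_gen \<rho>)"
  using prim_gen_ray(1) unfolding primitive_generator_def by blast

lemma inj_on_prim_gen_rays: "fan \<Sigma> \<Longrightarrow> inj_on prim_gen (rays \<Sigma>)"
  by (rule inj_onI) (metis prim_gen_ray(2))

lemma face_ray_in_cone_rays:
  assumes fan: "fan \<Sigma>" and \<sigma>: "\<sigma> \<in> \<Sigma>" and s: "s \<noteq> 0" "pos_hull {s} face_of \<sigma>"
  shows "pos_hull {s} \<in> cone_rays \<Sigma> \<sigma>"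
proof -
  have "pos_hull {s} \<in> \<Sigma>" using fan_face_of_mem[OF fan \<sigma> s(2)] zero_in_pos_hull by blast
  then show ?thesis using aff_dim_pos_hull_singleton[OF s(1)] face_of_imp_subset[OF s(2)]
    unfolding cone_rays_def rays_def by simp
qed

lemma fan_cone_eq_pos_hull_prim_gen:
  assumes fan: "fan \<Sigma>" and \<sigma>: "\<sigma> \<in> \<Sigma>"
  shows "\<sigma> = pos_hull (prim_gen ` cone_rays \<Sigma> \<sigma>)"
proof -
  define G where "G = prim_gen ` cone_rays \<Sigma> \<sigma>"
  have fG: "finite G" unfolding G_def using finite_cone_rays[OF fan] by simp
  obtain S where S: "finite S" "S \<subseteq> lattice" "\<sigma> = pos_hull S"
    using fan_cone_pos_hull[OF fan \<sigma>] by blast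
  obtain S' where S': "S' \<subseteq> S" "pos_hull S' = \<sigma>" "\<forall>s\<in>S'. s \<noteq> 0 \<and> pos_hull {s} face_of \<sigma>"
    using strongly_convex_pos_hull_extreme_generators[OF S(1)] S(3) fan_strongly_convex[OF fan \<sigma>]
    by auto
  have "S' \<subseteq> pos_hull G"
  proof
    fix s assume s: "s \<in> S'"
    let ?\<rho> = "pos_hull {s}"
    have \<rho>: "?\<rho> \<in> cone_rays \<Sigma> \<sigma>" using face_ray_in_cone_rays[OF fan \<sigma>] S'(3) s by blast
    have "s \<in> ?\<rho>" "lattice_pt s" using s S'(1) S(2) by (auto simp: pos_hull_inc lattice_def)
    then obtain k :: nat where "s = real k *\<^sub>R prim_gen ?\<rho>"
      using prim_gen_ray(1)[OF fan] \<rho> cone_rays_subset_rays unfolding primitive_generator_def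
      by blast
    moreover have "prim_gen ?\<rho> \<in> pos_hull G" using \<rho> fG by (simp add: G_def pos_hull_inc)
    ultimately show "s \<in> pos_hull G" by (metis convex_cone_iff convex_cone_pos_hull of_nat_0_le_iff)
  qed
  then have "\<sigma> \<subseteq> pos_hull G" using S'(2) pos_hull_minimal finite_subset[OF S'(1) S(1)] by blast
  moreover have "G \<subseteq> \<sigma>"
    using prim_gen_ray(1)[OF fan] unfolding G_def cone_rays_def primitive_generator_def by blast
  then have "pos_hull G \<subseteq> \<sigma>" using pos_hull_minimal[OF fG] S(3) by blast
  ultimately show ?thesis unfolding G_def by blast
qed

lemma complete_fan_has_maximal_cone:
  assumes "complete_fan \<Sigma>"
  obtains \<sigma> where "maximal_cone \<Sigma> \<sigma>"
proof -
  have "fan \<Sigma>" and cover: "\<Union>\<Sigma> = UNIV" using assms by (simp_all add: complete_fan_def)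
  then have "finite \<Sigma>" "\<Sigma> \<noteq> {}" by (auto simp: fan_def)
  then show ?thesis using finite_has_maximal[of \<Sigma>] that unfolding maximal_cone_def by (metis less_le)
qed

text \<open>Near a relative interior point \<open>x\<close> of \<open>\<sigma>\<close> every point lies in a cone containing \<open>x\<close>
  (the other cones form a closed set), and such a cone contains \<open>\<sigma>\<close>, hence equals \<open>\<sigma>\<close>.\<close>

lemma maximal_cone_interior_nonempty:
  assumes cf: "complete_fan \<Sigma>" and mx: "maximal_cone \<Sigma> \<sigma>"
  shows "interior \<sigma> \<noteq> {}"
proof -
  have fan: "fan \<Sigma>" and cover: "\<Union>\<Sigma> = UNIV" using cf unfolding complete_fan_def by auto
  have \<sigma>: "\<sigma> \<in> \<Sigma>" and top: "\<not> (\<exists>\<tau>\<in>\<Sigma>. \<sigma> \<subset> \<tau>)"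
    using mx unfolding maximal_cone_def by auto
  obtain S where "\<sigma> = pos_hull S" using fan_cone_pos_hull[OF fan \<sigma>] by blast
  then have "convex \<sigma>" "\<sigma> \<noteq> {}" using convex_pos_hull zero_in_pos_hull by auto
  then obtain x where x: "x \<in> rel_interior \<sigma>" using rel_interior_eq_empty by blast
  define U where "U = \<Union>{\<tau>\<in>\<Sigma>. x \<notin> \<tau>}"
  have "finite \<Sigma>" using fan by (simp add: fan_def)
  then have "open (- U)"
    unfolding U_def by (intro open_Compl closed_Union) (auto intro: closed_fan_cone[OF fan])
  moreover have "x \<in> - U" unfolding U_def by blast
  ultimately obtain r where r: "r > 0" "ball x r \<subseteq> - U" by (meson open_contains_ball_eq)
  have "ball x r \<subseteq> \<sigma>"
  proof
    fix y assume "y \<in> ball x r"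
    moreover obtain \<tau> where \<tau>: "\<tau> \<in> \<Sigma>" "y \<in> \<tau>" using cover by blast
    ultimately have "x \<in> \<tau>" using r(2) unfolding U_def by blast
    then have "(\<sigma> \<inter> \<tau>) \<inter> rel_interior \<sigma> \<noteq> {}" using x rel_interior_subset by blast
    then have "\<sigma> \<subseteq> \<sigma> \<inter> \<tau>"
      by (rule subset_of_face_of[OF fan_Int_face_of[OF fan \<sigma> \<tau>(1)] subset_refl])
    moreover have "\<not> \<sigma> \<subset> \<tau>" using top \<tau>(1) by blast
    ultimately have "\<tau> = \<sigma>" by blast
    then show "y \<in> \<sigma>" using \<tau>(2) by simp
  qed
  then have "ball x r \<subseteq> interior \<sigma>" by (simp add: interior_maximal)
  then show ?thesis using r(1) centre_in_ball by blast
qed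

lemma span_prim_gen_maximal_cone:
  fixes \<Sigma> :: "(real^'n) set set"
  assumes cf: "complete_fan \<Sigma>" and mx: "maximal_cone \<Sigma> \<sigma>"
  shows "span (prim_gen ` cone_rays \<Sigma> \<sigma>) = UNIV"
proof -
  let ?G = "prim_gen ` cone_rays \<Sigma> \<sigma>"
  have fan: "fan \<Sigma>" and \<sigma>: "\<sigma> \<in> \<Sigma>"
    using cf mx unfolding complete_fan_def maximal_cone_def by auto
  have "\<sigma> \<subseteq> span ?G"
    using fan_cone_eq_pos_hull_prim_gen[OF fan \<sigma>] pos_hull_subset_span finite_cone_rays[OF fan]
    by (metis finite_imageI)
  then have "interior \<sigma> \<subseteq> interior (span ?G)" by (rule interior_mono)
  then have "interior (span ?G) \<noteq> {}" using maximal_cone_interior_nonempty[OF cf mx] by blast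
  then have "\<not> dim (span ?G) < DIM(real^'n)" using empty_interior_lowdim[of "span ?G"] by blast
  then have "dim ?G = DIM(real^'n)" using dim_subset_UNIV[of ?G] by simp
  then show ?thesis by (simp only: dim_eq_full)
qed

subsection \<open>Lattice bases\<close>

lemma Z_basis_coeffs_unique:
  fixes B :: "(real^'n) set"
  assumes ZB: "Z_basis B" and eq: "(\<Sum>b\<in>B. of_int (c b) *\<^sub>R b) = (\<Sum>b\<in>B. of_int (d b) *\<^sub>R b)"
    and b: "b \<in> B"
  shows "c b = d b"
proof -
  have indep: "\<forall>c :: real^'n \<Rightarrow> int. (\<Sum>b\<in>B. of_int (c b) *\<^sub>R b) = 0 \<longrightarrow> (\<forall>b\<in>B. c b = 0)"
    using ZB unfolding Z_basis_def by blast
  have "(\<Sum>b\<in>B. of_int (c b - d b) *\<^sub>R b) = 0"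
    using eq by (simp add: scaleR_diff_left sum_subtractf)
  then show ?thesis using indep[rule_format, of "\<lambda>b. c b - d b"] b by simp
qed

text \<open>Writing the unit vectors in the basis \<open>B\<close> yields integer vectors \<open>w b'\<close> dual to \<open>B\<close>,
  which detect the coefficients of any real linear relation.\<close>

lemma Z_basis_independent:
  fixes B :: "(real^'n) set"
  assumes ZB: "Z_basis B"
  shows "independent B"
proof -
  have fB: "finite B" and BL: "B \<subseteq> lattice"
    and Zspan: "\<forall>v\<in>lattice. \<exists>c :: real^'n \<Rightarrow> int. v = (\<Sum>b\<in>B. of_int (c b) *\<^sub>R b)"
    using ZB unfolding Z_basis_def by auto
  have "\<forall>i. \<exists>c :: real^'n \<Rightarrow> int. axis i 1 = (\<Sum>b\<in>B. of_int (c b) *\<^sub>R b)"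
    using Zspan axis_in_lattice by blast
  then obtain C :: "'n \<Rightarrow> real^'n \<Rightarrow> int"
    where C: "\<And>i. axis i 1 = (\<Sum>b\<in>B. of_int (C i b) *\<^sub>R b)"
    by metis
  define w :: "real^'n \<Rightarrow> real^'n" where "w b' = (\<chi> i. of_int (C i b'))" for b'
  have expand: "v = (\<Sum>b'\<in>B. (v \<bullet> w b') *\<^sub>R b')" for v
  proof -
    have "v = (\<Sum>i\<in>UNIV. v $ i *\<^sub>R axis i 1)"
      using basis_expansion[of v] by (simp add: scalar_mult_eq_scaleR)
    also have "\<dots> = (\<Sum>i\<in>UNIV. \<Sum>b'\<in>B. (v $ i * of_int (C i b')) *\<^sub>R b')"
      by (simp add: C scaleR_sum_right)
    also have "\<dots> = (\<Sum>b'\<in>B. \<Sum>i\<in>UNIV. (v $ i * of_int (C i b')) *\<^sub>R b')"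
      by (rule sum.swap)
    also have "\<dots> = (\<Sum>b'\<in>B. (v \<bullet> w b') *\<^sub>R b')"
      by (simp add: w_def inner_vec_def scaleR_sum_left)
    finally show ?thesis .
  qed
  have dual: "b \<bullet> w b' = (if b' = b then 1 else 0)" if b: "b \<in> B" and b': "b' \<in> B" for b b'
  proof -
    have "b \<bullet> w b'' \<in> \<int>" for b''
      using b BL unfolding w_def inner_vec_def lattice_def lattice_pt_def
      by (auto intro!: Ints_sum Ints_mult)
    then have e: "of_int \<lfloor>b \<bullet> w b''\<rfloor> = b \<bullet> w b''" for b'' by simp
    have "(\<Sum>b''\<in>B. of_int \<lfloor>b \<bullet> w b''\<rfloor> *\<^sub>R b'') = b"
      unfolding e by (rule expand[symmetric])
    also have "\<dots> = (\<Sum>b''\<in>B. of_int (if b'' = b then 1 else 0) *\<^sub>R b'')"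
      using fB b by (simp add: if_distrib[of real_of_int] if_distrib[of "\<lambda>r. r *\<^sub>R _"] cong: if_cong)
    finally have "(\<Sum>b''\<in>B. of_int \<lfloor>b \<bullet> w b''\<rfloor> *\<^sub>R b'') =
        (\<Sum>b''\<in>B. of_int (if b'' = b then 1 else 0) *\<^sub>R b'')" .
    then have "\<lfloor>b \<bullet> w b'\<rfloor> = (if b' = b then 1 else 0)"
      by (rule Z_basis_coeffs_unique[OF ZB _ b'])
    then have "of_int \<lfloor>b \<bullet> w b'\<rfloor> = (if b' = b then 1 else (0::real))" by simp
    then show ?thesis unfolding e .
  qed
  show ?thesis
  proof (rule independent_if_scalars_zero[OF fB])
    fix f b' assume rel: "(\<Sum>b\<in>B. f b *\<^sub>R b) = 0" and b': "b' \<in> B"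
    have "0 = (\<Sum>b\<in>B. f b *\<^sub>R b) \<bullet> w b'" using rel by simp
    also have "\<dots> = (\<Sum>b\<in>B. f b * (if b' = b then 1 else 0))"
      using dual[OF _ b'] by (simp add: inner_sum_left)
    also have "\<dots> = f b'" using fB b' by (simp add: if_distrib cong: if_cong)
    finally show "f b' = 0" by simp
  qed
qed

lemma spanning_subset_of_independent_eq:
  assumes "independent B" "G \<subseteq> B" "span G = UNIV"
  shows "G = B"
proof (rule ccontr)
  assume "G \<noteq> B"
  then obtain b where b: "b \<in> B" "b \<notin> G" using assms(2) by blast
  then have "span G \<subseteq> span (B - {b})" using assms(2) by (intro span_mono) blast
  then have "b \<in> span (B - {b})" using assms(3) by blast
  then show False using assms(1) b(1) unfolding dependent_def by blast
qed

lemma linear_image_lattice_subset: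
  fixes B :: "(real^'n) set"
  assumes ZB: "Z_basis B" and lin: "linear F" and FB: "\<forall>b\<in>B. lattice_pt (F b)"
  shows "F ` lattice \<subseteq> lattice"
proof
  fix w assume "w \<in> F ` lattice"
  then obtain v where v: "v \<in> lattice" "w = F v" by blast
  obtain c :: "real^'n \<Rightarrow> int" where "v = (\<Sum>b\<in>B. of_int (c b) *\<^sub>R b)"
    using ZB v(1) unfolding Z_basis_def by blast
  then have "w = (\<Sum>b\<in>B. of_int (c b) *\<^sub>R F b)"
    unfolding v(2) by (simp add: linear_sum[OF lin] linear_scale[OF lin])
  then show "w \<in> lattice" unfolding lattice_def using FB by (simp add: lattice_pt_int_combination)
qed

lemma Z_basis_linear_image:
  fixes B :: "(real^'n) set" and \<Phi> :: "real^'n \<Rightarrow> real^'n"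
  assumes ZB: "Z_basis B" and lin: "linear \<Phi>" and inj: "inj \<Phi>" and onto: "\<Phi> ` lattice = lattice"
  shows "Z_basis (\<Phi> ` B)"
proof -
  have fB: "finite B" and BL: "B \<subseteq> lattice"
    and Zindep: "\<And>c :: real^'n \<Rightarrow> int. (\<Sum>b\<in>B. of_int (c b) *\<^sub>R b) = 0 \<Longrightarrow> (\<forall>b\<in>B. c b = 0)"
    and Zspan: "\<And>v. v \<in> lattice \<Longrightarrow> \<exists>c :: real^'n \<Rightarrow> int. v = (\<Sum>b\<in>B. of_int (c b) *\<^sub>R b)"
    using ZB unfolding Z_basis_def by auto
  have reindex: "(\<Sum>b'\<in>\<Phi> ` B. g b') = (\<Sum>b\<in>B. g (\<Phi> b))" for g :: "real^'n \<Rightarrow> real^'n"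
    using sum.reindex[OF inj_on_subset[OF inj subset_UNIV]] by simp
  have image_sum: "\<Phi> (\<Sum>b\<in>B. of_int (c b) *\<^sub>R b) = (\<Sum>b\<in>B. of_int (c b) *\<^sub>R \<Phi> b)" for c :: "real^'n \<Rightarrow> int"
    by (simp add: linear_sum[OF lin] linear_scale[OF lin])
  have "(\<forall>b\<in>\<Phi> ` B. c b = 0)" if "(\<Sum>b\<in>\<Phi> ` B. of_int (c b) *\<^sub>R b) = 0" for c :: "real^'n \<Rightarrow> int"
  proof -
    have "\<Phi> (\<Sum>b\<in>B. of_int (c (\<Phi> b)) *\<^sub>R b) = 0" using that by (simp add: reindex image_sum)
    then have "(\<Sum>b\<in>B. of_int ((c \<circ> \<Phi>) b) *\<^sub>R b) = 0" using linear_injective_0[OF lin] inj by simp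
    then have "\<forall>b\<in>B. (c \<circ> \<Phi>) b = 0" by (rule Zindep)
    then show ?thesis by simp
  qed
  moreover have "\<exists>c :: real^'n \<Rightarrow> int. w = (\<Sum>b\<in>\<Phi> ` B. of_int (c b) *\<^sub>R b)" if "w \<in> lattice" for w
  proof -
    have "w \<in> \<Phi> ` lattice" using that by (simp only: onto)
    then obtain v where v: "v \<in> lattice" "w = \<Phi> v" by blast
    obtain c :: "real^'n \<Rightarrow> int" where c: "v = (\<Sum>b\<in>B. of_int (c b) *\<^sub>R b)"
      using Zspan[OF v(1)] by blast
    have "w = (\<Sum>b\<in>B. of_int (c b) *\<^sub>R \<Phi> b)" unfolding v(2) c by (rule image_sum)
    also have "\<dots> = (\<Sum>b'\<in>\<Phi> ` B. of_int (c (inv \<Phi> b')) *\<^sub>R b')"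
      by (simp only: reindex inv_f_f[OF inj])
    finally show ?thesis by (rule exI[of _ "\<lambda>b'. c (inv \<Phi> b')"])
  qed
  moreover have "finite (\<Phi> ` B)" using fB by simp
  moreover have "\<Phi> ` B \<subseteq> lattice" using image_mono[OF BL, of \<Phi>] by (simp only: onto)
  ultimately show ?thesis unfolding Z_basis_def by blast
qed

lemma smooth_maximal_cone_Z_basis:
  assumes cf: "complete_fan \<Sigma>" and mx: "maximal_cone \<Sigma> \<sigma>" and sm: "smooth_cone \<Sigma> \<sigma>"
  shows "Z_basis (prim_gen ` cone_rays \<Sigma> \<sigma>)"
proof -
  obtain B where B: "Z_basis B" "prim_gen ` cone_rays \<Sigma> \<sigma> \<subseteq> B"
    using sm unfolding smooth_cone_def by blast
  have "prim_gen ` cone_rays \<Sigma> \<sigma> = B"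
    using spanning_subset_of_independent_eq[OF Z_basis_independent[OF B(1)] B(2)]
      span_prim_gen_maximal_cone[OF cf mx] by blast
  then show ?thesis using B(1) by simp
qed

lemma smooth_fan_imp_simplicial:
  assumes fan: "fan \<Sigma>" and sm: "smooth_fan \<Sigma>"
  shows "simplicial_fan \<Sigma>"
  unfolding simplicial_fan_def
proof
  fix \<sigma> assume "\<sigma> \<in> \<Sigma>"
  then obtain B where B: "Z_basis B" "prim_gen ` cone_rays \<Sigma> \<sigma> \<subseteq> B"
    using sm unfolding smooth_fan_def smooth_cone_def by blast
  have "independent (prim_gen ` cone_rays \<Sigma> \<sigma>)"
    by (rule real_vector.independent_mono[OF Z_basis_independent[OF B(1)] B(2)])
  moreover have "inj_on prim_gen (cone_rays \<Sigma> \<sigma>)"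
    using inj_on_prim_gen_rays[OF fan] cone_rays_subset_rays by (rule inj_on_subset)
  ultimately show "inj_on prim_gen (cone_rays \<Sigma> \<sigma>) \<and> independent (prim_gen ` cone_rays \<Sigma> \<sigma>)"
    by blast
qed

subsection \<open>Amply equivalent fans\<close>

lemma contained_in_cone_iff_no_primitive_collection:
  assumes fan: "fan \<Sigma>" and C: "C \<subseteq> rays \<Sigma>"
  shows "(\<exists>\<sigma>\<in>\<Sigma>. C \<subseteq> cone_rays \<Sigma> \<sigma>) \<longleftrightarrow> \<not> (\<exists>C'\<subseteq>C. primitive_collection \<Sigma> C')"
proof
  assume "\<exists>\<sigma>\<in>\<Sigma>. C \<subseteq> cone_rays \<Sigma> \<sigma>"
  then show "\<not> (\<exists>C'\<subseteq>C. primitive_collection \<Sigma> C')"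
    unfolding primitive_collection_def by blast
next
  assume none: "\<not> (\<exists>C'\<subseteq>C. primitive_collection \<Sigma> C')"
  let ?in_cone = "\<lambda>D. \<exists>\<sigma>\<in>\<Sigma>. D \<subseteq> cone_rays \<Sigma> \<sigma>"
  let ?bad = "{D. D \<subseteq> C \<and> \<not> ?in_cone D}"
  show "?in_cone C"
  proof (rule ccontr)
    assume "\<not> ?in_cone C"
    then have "C \<in> ?bad" by blast
    moreover have "finite ?bad"
      using finite_subset[OF C finite_rays[OF fan]] by (intro finite_subset[of ?bad "Pow C"]) auto
    ultimately obtain D where D: "D \<in> ?bad" and min: "\<forall>D'\<in>?bad. D' \<le> D \<longrightarrow> D = D'"
      using finite_has_minimal[of ?bad] by blast
    have "primitive_collection \<Sigma> D"
      unfolding primitive_collection_def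
    proof (intro conjI allI impI)
      show "D \<subseteq> rays \<Sigma>" using D C by blast
      show "\<not> ?in_cone D" using D by blast
      show "?in_cone D'" if "D' \<subset> D" for D'
        using that D min by blast
    qed
    then show False using none D by blast
  qed
qed

lemma amply_equivalent_contained_in_cone_iff:
  assumes amp: "amply_equivalent \<Sigma>1 \<Sigma>2 \<Psi>" and C: "C \<subseteq> rays \<Sigma>1"
  shows "(\<exists>\<sigma>\<in>\<Sigma>1. C \<subseteq> cone_rays \<Sigma>1 \<sigma>) \<longleftrightarrow> (\<exists>\<tau>\<in>\<Sigma>2. \<Psi> ` C \<subseteq> cone_rays \<Sigma>2 \<tau>)"
proof -
  have cf: "complete_fan \<Sigma>1" "complete_fan \<Sigma>2" and bij: "bij_betw \<Psi> (rays \<Sigma>1) (rays \<Sigma>2)"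
    and pc: "\<And>C. C \<subseteq> rays \<Sigma>1 \<Longrightarrow> primitive_collection \<Sigma>1 C \<longleftrightarrow> primitive_collection \<Sigma>2 (\<Psi> ` C)"
    using amp unfolding amply_equivalent_def by simp_all
  have fan: "fan \<Sigma>1" "fan \<Sigma>2" using cf by (simp_all add: complete_fan_def)
  have \<Psi>C: "\<Psi> ` C \<subseteq> rays \<Sigma>2" using C bij_betw_imp_surj_on[OF bij] by blast
  have "(\<exists>C'\<subseteq>C. primitive_collection \<Sigma>1 C') \<longleftrightarrow> (\<exists>D\<subseteq>\<Psi> ` C. primitive_collection \<Sigma>2 D)"
  proof
    assume "\<exists>C'\<subseteq>C. primitive_collection \<Sigma>1 C'"
    then obtain C' where "C' \<subseteq> C" "primitive_collection \<Sigma>1 C'" by blast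
    then show "\<exists>D\<subseteq>\<Psi> ` C. primitive_collection \<Sigma>2 D"
      using pc[of C'] C by (intro exI[of _ "\<Psi> ` C'"]) auto
  next
    assume "\<exists>D\<subseteq>\<Psi> ` C. primitive_collection \<Sigma>2 D"
    then obtain D where D: "D \<subseteq> \<Psi> ` C" "primitive_collection \<Sigma>2 D" by blast
    define C' where "C' = {c\<in>C. \<Psi> c \<in> D}"
    have "\<Psi> ` C' = D" "C' \<subseteq> C" unfolding C'_def using D(1) by auto
    then show "\<exists>C'\<subseteq>C. primitive_collection \<Sigma>1 C'"
      using pc[of C'] C D(2) by (intro exI[of _ C']) auto
  qed
  then show ?thesis
    unfolding contained_in_cone_iff_no_primitive_collection[OF fan(1) C]
      contained_in_cone_iff_no_primitive_collection[OF fan(2) \<Psi>C] by simp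
qed

lemma amply_equivalent_sym:
  fixes \<Sigma>1 \<Sigma>2 :: "(real^'n) set set"
  assumes amp: "amply_equivalent \<Sigma>1 \<Sigma>2 \<Psi>"
  shows "amply_equivalent \<Sigma>2 \<Sigma>1 (inv_into (rays \<Sigma>1) \<Psi>)"
proof -
  let ?\<Psi>' = "inv_into (rays \<Sigma>1) \<Psi>"
  have cf: "complete_fan \<Sigma>1" "complete_fan \<Sigma>2" and bij: "bij_betw \<Psi> (rays \<Sigma>1) (rays \<Sigma>2)"
    and pc: "\<And>C. C \<subseteq> rays \<Sigma>1 \<Longrightarrow> primitive_collection \<Sigma>1 C \<longleftrightarrow> primitive_collection \<Sigma>2 (\<Psi> ` C)"
    and rel: "\<And>a :: (real^'n) set \<Rightarrow> int.
      (\<Sum>\<rho>\<in>rays \<Sigma>1. of_int (a \<rho>) *\<^sub>R prim_gen \<rho>) = 0 \<longleftrightarrow>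
      (\<Sum>\<rho>\<in>rays \<Sigma>1. of_int (a \<rho>) *\<^sub>R prim_gen (\<Psi> \<rho>)) = 0"
    using amp unfolding amply_equivalent_def by simp_all
  have bij': "bij_betw ?\<Psi>' (rays \<Sigma>2) (rays \<Sigma>1)" by (rule bij_betw_inv_into[OF bij])
  have pc': "primitive_collection \<Sigma>2 C \<longleftrightarrow> primitive_collection \<Sigma>1 (?\<Psi>' ` C)"
    if C: "C \<subseteq> rays \<Sigma>2" for C
  proof -
    have "?\<Psi>' ` C \<subseteq> rays \<Sigma>1"
      using image_mono[OF C, of ?\<Psi>'] by (simp only: bij_betw_imp_surj_on[OF bij'])
    moreover have "\<Psi> ` ?\<Psi>' ` C = C"
      using image_inv_into_cancel[OF bij_betw_imp_surj_on[OF bij] C] .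
    ultimately show ?thesis using pc by simp
  qed
  have rel': "(\<Sum>\<rho>\<in>rays \<Sigma>2. of_int (a \<rho>) *\<^sub>R prim_gen \<rho>) = 0 \<longleftrightarrow>
      (\<Sum>\<rho>\<in>rays \<Sigma>2. of_int (a \<rho>) *\<^sub>R prim_gen (?\<Psi>' \<rho>)) = 0" for a :: "(real^'n) set \<Rightarrow> int"
  proof -
    have "(\<Sum>\<rho>\<in>rays \<Sigma>2. of_int (a \<rho>) *\<^sub>R prim_gen \<rho>) =
        (\<Sum>\<rho>\<in>rays \<Sigma>1. of_int (a (\<Psi> \<rho>)) *\<^sub>R prim_gen (\<Psi> \<rho>))"
      by (rule sum.reindex_bij_betw[OF bij, of "\<lambda>\<rho>. of_int (a \<rho>) *\<^sub>R prim_gen \<rho>", symmetric])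
    moreover have "(\<Sum>\<rho>\<in>rays \<Sigma>2. of_int (a \<rho>) *\<^sub>R prim_gen (?\<Psi>' \<rho>)) =
        (\<Sum>\<rho>\<in>rays \<Sigma>1. of_int (a (\<Psi> \<rho>)) *\<^sub>R prim_gen (?\<Psi>' (\<Psi> \<rho>)))"
      by (rule sum.reindex_bij_betw[OF bij, of "\<lambda>\<rho>. of_int (a \<rho>) *\<^sub>R prim_gen (?\<Psi>' \<rho>)", symmetric])
    moreover have "\<dots> = (\<Sum>\<rho>\<in>rays \<Sigma>1. of_int (a (\<Psi> \<rho>)) *\<^sub>R prim_gen \<rho>)"
      by (rule sum.cong[OF refl]) (simp add: bij_betw_inv_into_left[OF bij])
    ultimately show ?thesis using rel[of "\<lambda>\<rho>. a (\<Psi> \<rho>)"] by simp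
  qed
  show ?thesis unfolding amply_equivalent_def using cf bij' by (simp add: pc' rel')
qed

lemma inv_prim_gen_correspondence:
  assumes bij: "bij_betw \<Psi> (rays \<Sigma>1) (rays \<Sigma>2)" and bij\<Phi>: "bij \<Phi>"
    and \<Phi>u: "\<forall>\<rho>\<in>rays \<Sigma>1. \<Phi> (prim_gen \<rho>) = prim_gen (\<Psi> \<rho>)"
  shows "\<forall>\<rho>\<in>rays \<Sigma>2. inv \<Phi> (prim_gen \<rho>) = prim_gen (inv_into (rays \<Sigma>1) \<Psi> \<rho>)"
proof
  fix \<rho> assume \<rho>: "\<rho> \<in> rays \<Sigma>2"
  let ?\<rho>' = "inv_into (rays \<Sigma>1) \<Psi> \<rho>"
  have "?\<rho>' \<in> rays \<Sigma>1" using bij_betw_apply[OF bij_betw_inv_into[OF bij] \<rho>] .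
  moreover have "\<Psi> ?\<rho>' = \<rho>" using bij_betw_inv_into_right[OF bij \<rho>] .
  ultimately have "prim_gen \<rho> = \<Phi> (prim_gen ?\<rho>')" using \<Phi>u by simp
  then show "inv \<Phi> (prim_gen \<rho>) = prim_gen ?\<rho>'"
    using inv_f_f[OF bij_is_inj[OF bij\<Phi>]] by simp
qed

lemma amply_equivalent_prim_gen_cone_rays:
  assumes amp: "amply_equivalent \<Sigma>1 \<Sigma>2 \<Psi>"
    and \<Phi>u: "\<forall>\<rho>\<in>rays \<Sigma>1. \<Phi> (prim_gen \<rho>) = prim_gen (\<Psi> \<rho>)"
    and \<tau>: "\<tau> \<in> \<Sigma>2"
  obtains \<sigma> C where "\<sigma> \<in> \<Sigma>1" "C \<subseteq> cone_rays \<Sigma>1 \<sigma>"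
    "prim_gen ` cone_rays \<Sigma>2 \<tau> = \<Phi> ` prim_gen ` C"
proof -
  let ?\<Psi>' = "inv_into (rays \<Sigma>1) \<Psi>"
  let ?C = "?\<Psi>' ` cone_rays \<Sigma>2 \<tau>"
  have bij: "bij_betw \<Psi> (rays \<Sigma>1) (rays \<Sigma>2)" using amp unfolding amply_equivalent_def by blast
  obtain \<sigma> where \<sigma>: "\<sigma> \<in> \<Sigma>1" "?C \<subseteq> cone_rays \<Sigma>1 \<sigma>"
    using amply_equivalent_contained_in_cone_iff[OF amply_equivalent_sym[OF amp] cone_rays_subset_rays] \<tau>
    by blast
  have "\<Phi> (prim_gen (?\<Psi>' \<rho>)) = prim_gen \<rho>" if "\<rho> \<in> rays \<Sigma>2" for \<rho>
  proof -
    have "?\<Psi>' \<rho> \<in> rays \<Sigma>1" using bij_betw_apply[OF bij_betw_inv_into[OF bij] that] .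
    moreover have "\<Psi> (?\<Psi>' \<rho>) = \<rho>" using bij_betw_inv_into_right[OF bij that] .
    ultimately show ?thesis using \<Phi>u by simp
  qed
  then have "prim_gen ` cone_rays \<Sigma>2 \<tau> = \<Phi> ` prim_gen ` ?C"
    using cone_rays_subset_rays[of \<Sigma>2 \<tau>] by (force simp: image_image)
  then show ?thesis using that \<sigma> by blast
qed

lemma amply_equivalent_simplicial:
  assumes amp: "amply_equivalent \<Sigma>1 \<Sigma>2 \<Psi>" and simp1: "simplicial_fan \<Sigma>1"
    and lin: "linear \<Phi>" and inj: "inj \<Phi>"
    and \<Phi>u: "\<forall>\<rho>\<in>rays \<Sigma>1. \<Phi> (prim_gen \<rho>) = prim_gen (\<Psi> \<rho>)"
  shows "simplicial_fan \<Sigma>2"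
  unfolding simplicial_fan_def
proof
  have fan2: "fan \<Sigma>2" using amp unfolding amply_equivalent_def complete_fan_def by blast
  fix \<tau> assume "\<tau> \<in> \<Sigma>2"
  then obtain \<sigma> C where \<sigma>: "\<sigma> \<in> \<Sigma>1" "C \<subseteq> cone_rays \<Sigma>1 \<sigma>"
    and gens: "prim_gen ` cone_rays \<Sigma>2 \<tau> = \<Phi> ` prim_gen ` C"
    using amply_equivalent_prim_gen_cone_rays[OF amp \<Phi>u] by blast
  have "independent (prim_gen ` cone_rays \<Sigma>1 \<sigma>)" using simp1 \<sigma>(1) unfolding simplicial_fan_def by blast
  then have "independent (prim_gen ` C)" by (rule real_vector.independent_mono) (use \<sigma>(2) in blast)
  then have "independent (\<Phi> ` prim_gen ` C)"
    by (rule real_vector.linear_independent_injective_image[OF lin _ inj_on_subset[OF inj subset_UNIV]])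
  then have "independent (prim_gen ` cone_rays \<Sigma>2 \<tau>)" unfolding gens .
  moreover have "inj_on prim_gen (cone_rays \<Sigma>2 \<tau>)"
    using inj_on_prim_gen_rays[OF fan2] cone_rays_subset_rays by (rule inj_on_subset)
  ultimately show "inj_on prim_gen (cone_rays \<Sigma>2 \<tau>) \<and> independent (prim_gen ` cone_rays \<Sigma>2 \<tau>)"
    by blast
qed

lemma amply_equivalent_smooth:
  assumes amp: "amply_equivalent \<Sigma>1 \<Sigma>2 \<Psi>" and sm1: "smooth_fan \<Sigma>1"
    and lin: "linear \<Phi>" and inj: "inj \<Phi>" and onto: "\<Phi> ` lattice = lattice"
    and \<Phi>u: "\<forall>\<rho>\<in>rays \<Sigma>1. \<Phi> (prim_gen \<rho>) = prim_gen (\<Psi> \<rho>)"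
  shows "smooth_fan \<Sigma>2"
  unfolding smooth_fan_def smooth_cone_def
proof
  fix \<tau> assume "\<tau> \<in> \<Sigma>2"
  then obtain \<sigma> C where \<sigma>: "\<sigma> \<in> \<Sigma>1" "C \<subseteq> cone_rays \<Sigma>1 \<sigma>"
    and gens: "prim_gen ` cone_rays \<Sigma>2 \<tau> = \<Phi> ` prim_gen ` C"
    using amply_equivalent_prim_gen_cone_rays[OF amp \<Phi>u] by blast
  obtain B where B: "Z_basis B" "prim_gen ` cone_rays \<Sigma>1 \<sigma> \<subseteq> B"
    using sm1 \<sigma>(1) unfolding smooth_fan_def smooth_cone_def by blast
  have "prim_gen ` cone_rays \<Sigma>2 \<tau> \<subseteq> \<Phi> ` B" unfolding gens using \<sigma>(2) B(2) by blast
  then show "\<exists>B. Z_basis B \<and> prim_gen ` cone_rays \<Sigma>2 \<tau> \<subseteq> B"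
    using Z_basis_linear_image[OF B(1) lin inj onto] by blast
qed

lemma amply_equivalent_image_cone:
  assumes amp: "amply_equivalent \<Sigma>1 \<Sigma>2 \<Psi>" and simp2: "simplicial_fan \<Sigma>2"
    and lin: "linear \<Phi>" and \<Phi>u: "\<forall>\<rho>\<in>rays \<Sigma>1. \<Phi> (prim_gen \<rho>) = prim_gen (\<Psi> \<rho>)"
    and \<sigma>: "\<sigma> \<in> \<Sigma>1"
  shows "\<Phi> ` \<sigma> \<in> \<Sigma>2"
proof -
  have fan1: "fan \<Sigma>1" and fan2: "fan \<Sigma>2"
    using amp unfolding amply_equivalent_def complete_fan_def by auto
  let ?C = "cone_rays \<Sigma>1 \<sigma>"
  obtain \<tau> where \<tau>: "\<tau> \<in> \<Sigma>2" "\<Psi> ` ?C \<subseteq> cone_rays \<Sigma>2 \<tau>"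
    using amply_equivalent_contained_in_cone_iff[OF amp cone_rays_subset_rays] \<sigma> by blast
  have "\<Phi> ` \<sigma> = \<Phi> ` pos_hull (prim_gen ` ?C)"
    using fan_cone_eq_pos_hull_prim_gen[OF fan1 \<sigma>] by simp
  also have "\<dots> = pos_hull (\<Phi> ` prim_gen ` ?C)"
    using pos_hull_linear_image[OF lin] finite_cone_rays[OF fan1] by simp
  also have "\<Phi> ` prim_gen ` ?C = prim_gen ` \<Psi> ` ?C"
    using \<Phi>u cone_rays_subset_rays[of \<Sigma>1 \<sigma>] by (force simp: image_image)
  finally have image_eq: "\<Phi> ` \<sigma> = pos_hull (prim_gen ` \<Psi> ` ?C)" .
  moreover have "pos_hull (prim_gen ` \<Psi> ` ?C) face_of \<tau>"
  proof -
    have "independent (prim_gen ` cone_rays \<Sigma>2 \<tau>)"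
      using simp2 \<tau>(1) unfolding simplicial_fan_def by blast
    then have "pos_hull (prim_gen ` \<Psi> ` ?C) face_of pos_hull (prim_gen ` cone_rays \<Sigma>2 \<tau>)"
      using finite_cone_rays[OF fan2] \<tau>(2) by (intro pos_hull_face_of_independent) auto
    then show ?thesis using fan_cone_eq_pos_hull_prim_gen[OF fan2 \<tau>(1)] by simp
  qed
  moreover have "\<Phi> ` \<sigma> \<noteq> {}" using image_eq zero_in_pos_hull by blast
  ultimately show ?thesis using fan_face_of_mem[OF fan2 \<tau>(1)] by simp
qed

lemma amply_equivalent_bij_betw_cones:
  assumes amp: "amply_equivalent \<Sigma>1 \<Sigma>2 \<Psi>"
    and simp1: "simplicial_fan \<Sigma>1" and simp2: "simplicial_fan \<Sigma>2"
    and lin: "linear \<Phi>" and bij\<Phi>: "bij \<Phi>"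
    and \<Phi>u: "\<forall>\<rho>\<in>rays \<Sigma>1. \<Phi> (prim_gen \<rho>) = prim_gen (\<Psi> \<rho>)"
  shows "bij_betw (\<lambda>\<sigma>. \<Phi> ` \<sigma>) \<Sigma>1 \<Sigma>2"
proof -
  have inj: "inj \<Phi>" and surj: "surj \<Phi>" using bij\<Phi> by (auto dest: bij_is_inj bij_is_surj)
  have bij\<Psi>: "bij_betw \<Psi> (rays \<Sigma>1) (rays \<Sigma>2)" using amp unfolding amply_equivalent_def by blast
  have "\<tau> \<in> (\<lambda>\<sigma>. \<Phi> ` \<sigma>) ` \<Sigma>1" if "\<tau> \<in> \<Sigma>2" for \<tau>
  proof (rule image_eqI)
    show "\<tau> = \<Phi> ` inv \<Phi> ` \<tau>" by (simp add: image_f_inv_f[OF surj])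
    show "inv \<Phi> ` \<tau> \<in> \<Sigma>1"
      using amply_equivalent_image_cone[OF amply_equivalent_sym[OF amp] simp1
          eucl.inj_linear_imp_inv_linear[OF lin inj]
          inv_prim_gen_correspondence[OF bij\<Psi> bij\<Phi> \<Phi>u] that] .
  qed
  then have "\<Sigma>2 \<subseteq> (\<lambda>\<sigma>. \<Phi> ` \<sigma>) ` \<Sigma>1" by blast
  moreover have "(\<lambda>\<sigma>. \<Phi> ` \<sigma>) ` \<Sigma>1 \<subseteq> \<Sigma>2"
    using amply_equivalent_image_cone[OF amp simp2 lin \<Phi>u] by blast
  moreover have "inj_on (\<lambda>\<sigma>. \<Phi> ` \<sigma>) \<Sigma>1" using inj by (simp add: inj_on_def inj_image_eq_iff)
  ultimately show ?thesis unfolding bij_betw_def by blast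
qed

lemma amply_equivalent_lattice_subset:
  assumes amp: "amply_equivalent \<Sigma>1 \<Sigma>2 \<Psi>" and lin: "linear \<Phi>"
    and \<Phi>u: "\<forall>\<rho>\<in>rays \<Sigma>1. \<Phi> (prim_gen \<rho>) = prim_gen (\<Psi> \<rho>)"
    and mx: "maximal_cone \<Sigma>1 \<sigma>" and sm: "smooth_cone \<Sigma>1 \<sigma>"
  shows "\<Phi> ` lattice \<subseteq> lattice"
proof (rule linear_image_lattice_subset[OF smooth_maximal_cone_Z_basis[OF _ mx sm] lin])
  have cf: "complete_fan \<Sigma>1" "complete_fan \<Sigma>2" and bij: "bij_betw \<Psi> (rays \<Sigma>1) (rays \<Sigma>2)"
    using amp unfolding amply_equivalent_def by auto
  then show "complete_fan \<Sigma>1" by blast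
  have "fan \<Sigma>2" using cf(2) by (simp add: complete_fan_def)
  then have "lattice_pt (prim_gen (\<Psi> \<rho>))" if "\<rho> \<in> rays \<Sigma>1" for \<rho>
    using lattice_pt_prim_gen bij_betw_apply[OF bij that] by blast
  then show "\<forall>b\<in>prim_gen ` cone_rays \<Sigma>1 \<sigma>. lattice_pt (\<Phi> b)"
    using \<Phi>u cone_rays_subset_rays[of \<Sigma>1 \<sigma>] by auto
qed

lemma amply_equivalent_lattice_supset:
  assumes amp: "amply_equivalent \<Sigma>1 \<Sigma>2 \<Psi>" and lin: "linear \<Phi>" and bij\<Phi>: "bij \<Phi>"
    and \<Phi>u: "\<forall>\<rho>\<in>rays \<Sigma>1. \<Phi> (prim_gen \<rho>) = prim_gen (\<Psi> \<rho>)"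
    and mx: "maximal_cone \<Sigma>2 \<tau>" and sm: "smooth_cone \<Sigma>2 \<tau>"
  shows "lattice \<subseteq> \<Phi> ` lattice"
proof -
  have bij\<Psi>: "bij_betw \<Psi> (rays \<Sigma>1) (rays \<Sigma>2)" using amp unfolding amply_equivalent_def by simp
  have "inv \<Phi> ` lattice \<subseteq> lattice"
    using amply_equivalent_lattice_subset[OF amply_equivalent_sym[OF amp]
        eucl.inj_linear_imp_inv_linear[OF lin bij_is_inj[OF bij\<Phi>]]
        inv_prim_gen_correspondence[OF bij\<Psi> bij\<Phi> \<Phi>u] mx sm] .
  then show ?thesis using image_mono image_f_inv_f[OF bij_is_surj[OF bij\<Phi>]] by metis
qed

theorem corollary5p26:
  fixes \<Sigma>1 \<Sigma>2 :: "(real^'n) set set"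
    and \<Psi> :: "(real^'n) set \<Rightarrow> (real^'n) set"
    and \<Phi> :: "real^'n \<Rightarrow> real^'n"
  assumes amp: "amply_equivalent \<Sigma>1 \<Sigma>2 \<Psi>"
    and sm1: "smooth_fan \<Sigma>1"
    and linPhi: "linear \<Phi>" and bijPhi: "bij \<Phi>"
    and Phi_u: "\<forall>\<rho>\<in>rays \<Sigma>1. \<Phi> (prim_gen \<rho>) = prim_gen (\<Psi> \<rho>)"
  shows "\<Phi> ` lattice \<subseteq> lattice \<and> inj_on \<Phi> lattice
     \<and> simplicial_fan \<Sigma>2
     \<and> ((\<exists>\<sigma>. maximal_cone \<Sigma>2 \<sigma> \<and> smooth_cone \<Sigma>2 \<sigma>) \<longleftrightarrow> \<Phi> ` lattice = lattice)
     \<and> (\<Phi> ` lattice = lattice \<longleftrightarrow> smooth_fan \<Sigma>2)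
     \<and> (smooth_fan \<Sigma>2 \<longrightarrow>
          bij_betw \<Phi> lattice lattice \<and> bij_betw (\<lambda>\<sigma>. \<Phi> ` \<sigma>) \<Sigma>1 \<Sigma>2)"
proof -
  have cf: "complete_fan \<Sigma>1" "complete_fan \<Sigma>2" using amp unfolding amply_equivalent_def by simp_all
  have inj: "inj \<Phi>" using bijPhi by (rule bij_is_inj)
  have "fan \<Sigma>1" using cf(1) by (simp add: complete_fan_def)
  then have simp1: "simplicial_fan \<Sigma>1" using sm1 by (rule smooth_fan_imp_simplicial)
  have simp2: "simplicial_fan \<Sigma>2" by (rule amply_equivalent_simplicial[OF amp simp1 linPhi inj Phi_u])
  obtain \<sigma>1 where "maximal_cone \<Sigma>1 \<sigma>1" using complete_fan_has_maximal_cone[OF cf(1)] .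
  then have into: "\<Phi> ` lattice \<subseteq> lattice"
    using amply_equivalent_lattice_subset[OF amp linPhi Phi_u] sm1
    unfolding smooth_fan_def maximal_cone_def by blast
  have "\<Phi> ` lattice = lattice" if "maximal_cone \<Sigma>2 \<tau>" "smooth_cone \<Sigma>2 \<tau>" for \<tau>
    using into amply_equivalent_lattice_supset[OF amp linPhi bijPhi Phi_u that] by blast
  moreover have "smooth_fan \<Sigma>2" if "\<Phi> ` lattice = lattice"
    by (rule amply_equivalent_smooth[OF amp sm1 linPhi inj that Phi_u])
  moreover have "\<exists>\<tau>. maximal_cone \<Sigma>2 \<tau> \<and> smooth_cone \<Sigma>2 \<tau>" if "smooth_fan \<Sigma>2"
    using complete_fan_has_maximal_cone[OF cf(2)] that
    unfolding smooth_fan_def maximal_cone_def by blast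
  moreover have "bij_betw (\<lambda>\<sigma>. \<Phi> ` \<sigma>) \<Sigma>1 \<Sigma>2"
    by (rule amply_equivalent_bij_betw_cones[OF amp simp1 simp2 linPhi bijPhi Phi_u])
  moreover have "inj_on \<Phi> lattice" using inj by (rule inj_on_subset) simp
  ultimately show ?thesis using into simp2 unfolding bij_betw_def by blast
qed

end
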